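(* Let $\overline\eta\in(-\frac{\pi}{2},\frac{\pi}{2})^m$ and $\overline V\in\mathbb{R}^n_{>0}$ satisfy $E(\overline\eta)\overline V=\overline E_{fd}$ and condition $(\ast)$ below. Consider the system \[ \dot\eta=v,\qquad T\dot V=-E(\eta)V+\overline E_{fd},\qquad \lambda=\Gamma(V)\boldsymbol{\sin}(\eta), \] with input $v\in\mathbb{R}^m$ and output $\lambda\in\mathbb{R}^m$, and let $\overline v=\mathbf{0}$, $\overline\lambda=\Gamma(\overline V)\boldsymbol{\sin}(\overline\eta)$. Then $W_2$ (defined below) is positive definite in a neighbourhood of $(\overline\eta,\overline V)$ and satisfies along solutions \[ \dot W_2=-(\nabla_VW_2)^TT^{-1}\nabla_VW_2+(\lambda-\overline\lambda)^T(v-\overline v), \] i.e. the system is incrementally passive with respect to the constant equilibrium $(\overline\eta,\overline V)$.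
   Context: Standing setup (power network model). $\mathcal{G}=(\mathcal{V},\mathcal{E})$ is a connected undirected graph with node set $\{1,\dots,n\}$ and $m$ edges; each edge $k=\{i,j\}$ is given an arbitrary orientation, and $D\in\mathbb{R}^{n\times m}$ is the incidence matrix: $d_{ik}=+1$ if $i$ is the positive end of edge $k$, $-1$ if $i$ is the negative end, $0$ otherwise. $|D|$ denotes the matrix of entrywise absolute values of $D$. $\mathbf{1}_n$ is the all-ones vector. For each edge $k=\{i,j\}$ there is a susceptance $B_{ij}=B_{ji}>0$; each node has a self-susceptance $B_{ii}<0$ with $|B_{ii}|>\sum_{j\in\mathcal{N}_i}|B_{ij}|$ ($\mathcal{N}_i$ the neighbours of $i$ in $\mathcal{G}$), and reactances $X_{di}>X'_{di}>0$. For $V\in\mathbb{R}^n$, $\Gamma(V)=\mathrm{diag}(\gamma_1,\dots,\gamma_m)$ with $\gamma_k=V_iV_jB_{ij}$ for edge $k=\{i,j\}$. For $\eta\in\mathbb{R}^m$, $E(\eta)\in\mathbb{R}^{n\times n}$ is the symmetric matrix with $E_{ii}=\frac{1-B_{ii}(X_{di}-X'_{di})}{X_{di}-X'_{di}}$, $E_{ij}=-B_{ij}\cos(\eta_k)$ if $k=\{i,j\}$ is an edge, and $E_{ij}=0$ otherwise. $\boldsymbol{\sin}$, $\boldsymbol{\cos}$ act componentwise. $M,A,T$ are diagonal positive definite $n\times n$ matrices ($A=\mathrm{diag}(A_i)$), and $\overline E_{fd}\in\mathbb{R}^n$ is a constant vector. The network dynamics, with input $u\in\mathbb{R}^n$ (power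 generation) and demand $P^l$, are \[ \dot\eta=D^T\omega,\quad M\dot\omega=u-D\Gamma(V)\boldsymbol{\sin}(\eta)-A\omega-P^l,\quad T\dot V=-E(\eta)V+\overline E_{fd},\quad y=\omega, \] with state $(\eta,\omega,V)\in\mathbb{R}^m\times\mathbb{R}^n\times\mathbb{R}^n$. Condition $(\ast)$ on $(\overline\eta,\overline V)$: \[ E(\overline\eta)-\mathrm{diag}(\overline V)^{-1}|D|\Gamma(\overline V)\mathrm{diag}(\boldsymbol{\sin}(\overline\eta))\mathrm{diag}(\boldsymbol{\cos}(\overline\eta))^{-1}\mathrm{diag}(\boldsymbol{\sin}(\overline\eta))|D|^T\mathrm{diag}(\overline V)^{-1}>0. \] Storage function: $W_2(\eta,\overline\eta,V,\overline V)=-\mathbf{1}_m^T\Gamma(V)\boldsymbol{\cos}(\eta)+\mathbf{1}_m^T\Gamma(\overline V)\boldsymbol{\cos}(\overline\eta)-(\Gamma(\overline V)\boldsymbol{\sin}(\overline\eta))^T(\eta-\overline\eta)-\overline E_{fd}^T(V-\overline V)+\tfrac12V^TFV-\tfrac12\overline V^TF\overline V$, where $F$ is diagonal with $F_{ii}=\frac{1-B_{ii}(X_{di}-X'_{di})}{X_{di}-X'_{di}}$; note $\nabla_VW_2=E(\eta)V-\overline E_{fd}$. *)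

theory Defs
  imports "HOL-Analysis.Analysis"
begin

text \<open>Graph: nodes of finite type 'n, edges of finite type 'm; edge k is oriented
  from its positive end pe k to its negative end ne k.\<close>

definition incidence :: "('m \<Rightarrow> 'n) \<Rightarrow> ('m \<Rightarrow> 'n) \<Rightarrow> real^'m^'n" where
  "incidence pe ne = (\<chi> i k. if i = pe k then 1 else if i = ne k then -1 else 0)"

definition absm :: "real^'b^'a \<Rightarrow> real^'b^'a" where
  "absm M = (\<chi> i j. \<bar>M$i$j\<bar>)"

definition diagm :: "real^'a \<Rightarrow> real^'a^'a" where
  "diagm x = (\<chi> i j. if i = j then x$i else 0)"

definition vsin :: "real^'a \<Rightarrow> real^'a" where
  "vsin x = (\<chi> k. sin (x$k))"

definition vcos :: "real^'a \<Rightarrow> real^'a" where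
  "vcos x = (\<chi> k. cos (x$k))"

definition gam :: "('m \<Rightarrow> 'n) \<Rightarrow> ('m \<Rightarrow> 'n) \<Rightarrow> ('n \<Rightarrow> 'n \<Rightarrow> real) \<Rightarrow> real^'n \<Rightarrow> real^'m" where
  "gam pe ne B V = (\<chi> k. V$(pe k) * V$(ne k) * B (pe k) (ne k))"

definition Gam :: "('m \<Rightarrow> 'n) \<Rightarrow> ('m \<Rightarrow> 'n) \<Rightarrow> ('n \<Rightarrow> 'n \<Rightarrow> real) \<Rightarrow> real^'n \<Rightarrow> real^'m^'m" where
  "Gam pe ne B V = diagm (gam pe ne B V)"

definition Fvec :: "('n \<Rightarrow> 'n \<Rightarrow> real) \<Rightarrow> real^'n \<Rightarrow> real^'n \<Rightarrow> real^'n" where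
  "Fvec B Xd Xdp = (\<chi> i. (1 - B i i * (Xd$i - Xdp$i)) / (Xd$i - Xdp$i))"

text \<open>E(eta): diagonal F_ii; off-diagonal -B_ij cos(eta_k) if k = {i,j} is an edge, 0 otherwise
  (written as a sum over the edges joining i and j, which has at most one term for a simple graph).\<close>
definition Emat :: "('m::finite \<Rightarrow> 'n) \<Rightarrow> ('m \<Rightarrow> 'n) \<Rightarrow> ('n \<Rightarrow> 'n \<Rightarrow> real) \<Rightarrow> real^'n \<Rightarrow> real^'n
    \<Rightarrow> real^'m \<Rightarrow> real^'n^'n" where
  "Emat pe ne B Xd Xdp eta = (\<chi> i j. if i = j then Fvec B Xd Xdp $ i
      else - (\<Sum>k\<in>{k. {pe k, ne k} = {i, j}}. B i j * cos (eta$k)))"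

definition W2 :: "('m::finite \<Rightarrow> 'n::finite) \<Rightarrow> ('m \<Rightarrow> 'n) \<Rightarrow> ('n \<Rightarrow> 'n \<Rightarrow> real) \<Rightarrow> real^'n \<Rightarrow> real^'n
    \<Rightarrow> real^'n \<Rightarrow> real^'m \<Rightarrow> real^'m \<Rightarrow> real^'n \<Rightarrow> real^'n \<Rightarrow> real" where
  "W2 pe ne B Xd Xdp Efd eta etab V Vb =
     - ((\<chi> k. 1) \<bullet> (Gam pe ne B V *v vcos eta))
     + ((\<chi> k. 1) \<bullet> (Gam pe ne B Vb *v vcos etab))
     - (Gam pe ne B Vb *v vsin etab) \<bullet> (eta - etab)
     - Efd \<bullet> (V - Vb)
     + (1/2) * (V \<bullet> (diagm (Fvec B Xd Xdp) *v V))
     - (1/2) * (Vb \<bullet> (diagm (Fvec B Xd Xdp) *v Vb))"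

definition pos_def :: "real^'n^'n \<Rightarrow> bool" where
  "pos_def M \<longleftrightarrow> (\<forall>x. x \<noteq> 0 \<longrightarrow> 0 < x \<bullet> (M *v x))"

definition cond_star :: "('m::finite \<Rightarrow> 'n::finite) \<Rightarrow> ('m \<Rightarrow> 'n) \<Rightarrow> ('n \<Rightarrow> 'n \<Rightarrow> real) \<Rightarrow> real^'n \<Rightarrow> real^'n
    \<Rightarrow> real^'m \<Rightarrow> real^'n \<Rightarrow> bool" where
  "cond_star pe ne B Xd Xdp etab Vb \<longleftrightarrow>
     pos_def (Emat pe ne B Xd Xdp etab
       - matrix_inv (diagm Vb) ** absm (incidence pe ne) ** Gam pe ne B Vb ** diagm (vsin etab)
         ** matrix_inv (diagm (vcos etab)) ** diagm (vsin etab) ** transpose (absm (incidence pe ne))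
         ** matrix_inv (diagm Vb))"

end

theory Submission
  imports Defs
begin

(* The dissipation identity is a chain-rule computation: the first variation dW2 of W2
   in direction (a, b) equals (lambda - lambda_bar) . a + b . (E(eta) V - E_fd), and along
   solutions b = V' = -T^-1 (E(eta) V - E_fd).

   Positive definiteness is a second-derivative test.  A general lemma
   (strict_local_min_second_variation) shows that a function whose first variation vanishes
   at x0 and whose second variation Q(x, h) is continuous, 2-homogeneous in h and positive
   definite at x0 has a strict local minimum at x0: by compactness of the unit sphere, Q stays
   positive definite on a ball, and two mean-value steps along segments conclude.  For W2 the
   second variation at the equilibrium is, after completing the square in a, a sum of
   nonnegative edge terms plus the quadratic form of the matrix in condition cond_star. *)

lemma positive_near_point:
  fixes Q :: "'a::metric_space \<Rightarrow> 'b::euclidean_space \<Rightarrow> real"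
  assumes cont: "continuous_on UNIV (\<lambda>p. Q (fst p) (snd p))"
    and hom: "\<And>x c h. Q x (c *\<^sub>R h) = c\<^sup>2 * Q x h"
    and pos: "\<And>h. h \<noteq> 0 \<Longrightarrow> Q x0 h > 0"
  obtains r where "r > 0" "\<And>x h. x \<in> ball x0 r \<Longrightarrow> h \<noteq> 0 \<Longrightarrow> Q x h > 0"
proof -
  define W where "W = {p. 0 < Q (fst p) (snd p)}"
  have W_open: "open W"
    unfolding W_def by (rule open_Collect_less) (use cont in \<open>auto intro: continuous_intros\<close>)
  have sphere_in_W: "{x0} \<times> sphere 0 1 \<subseteq> W"
  proof
    fix p assume "p \<in> {x0} \<times> sphere (0::'b) 1"
    then have "fst p = x0" "snd p \<noteq> 0" by auto
    then show "p \<in> W" unfolding W_def using pos by simp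
  qed
  obtain X0 where X0: "x0 \<in> X0" "open X0" "X0 \<times> sphere 0 1 \<subseteq> W"
    using Elementary_Topology.tube_lemma[OF compact_sphere W_open sphere_in_W] by blast
  obtain r where r: "r > 0" "ball x0 r \<subseteq> X0"
    using X0(1,2) open_contains_ball by blast
  have "Q x h > 0" if x: "x \<in> ball x0 r" and h: "h \<noteq> 0" for x h
  proof -
    have "x \<in> X0" "h /\<^sub>R norm h \<in> sphere 0 1"
      using r(2) x h by auto
    then have "(x, h /\<^sub>R norm h) \<in> W"
      using X0(3) by blast
    then have "0 < Q x (h /\<^sub>R norm h)" by (simp add: W_def)
    also have "\<dots> = Q x h / (norm h)\<^sup>2"
      by (simp add: hom divide_inverse power_inverse mult.commute)
    finally show ?thesis by (simp add: zero_less_divide_iff)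
  qed
  with r(1) show ?thesis using that by blast
qed

lemma positive_by_second_derivative:
  fixes g d q :: "real \<Rightarrow> real"
  assumes dg: "\<And>t. (g has_real_derivative d t) (at t)"
    and dd: "\<And>t. (d has_real_derivative q t) (at t)"
    and g0: "g 0 = 0" and d0: "d 0 = 0"
    and q_pos: "\<And>t. 0 < t \<Longrightarrow> t < 1 \<Longrightarrow> q t > 0"
  shows "g 1 > 0"
proof -
  have d_pos: "d t > 0" if "0 < t" "t < 1" for t
  proof -
    obtain z where "0 < z" "z < t" "d t - d 0 = (t - 0) * q z"
      using MVT2[OF \<open>0 < t\<close> dd] by blast
    then show ?thesis using q_pos[of z] that d0 by simp
  qed
  obtain z where "0 < z" "z < 1" "g 1 - g 0 = (1 - 0) * d z"
    using MVT2[OF zero_less_one dg] by blast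
  then show ?thesis using d_pos[of z] g0 by simp
qed

lemma strict_local_min_second_variation:
  fixes W :: "'a::euclidean_space \<Rightarrow> real" and D Q :: "'a \<Rightarrow> 'a \<Rightarrow> real"
  assumes dW: "\<And>x h t. ((\<lambda>t. W (x + t *\<^sub>R h)) has_real_derivative D (x + t *\<^sub>R h) h) (at t)"
    and dD: "\<And>x h t. ((\<lambda>t. D (x + t *\<^sub>R h) h) has_real_derivative Q (x + t *\<^sub>R h) h) (at t)"
    and crit: "\<And>h. D x0 h = 0"
    and cont: "continuous_on UNIV (\<lambda>p. Q (fst p) (snd p))"
    and hom: "\<And>x c h. Q x (c *\<^sub>R h) = c\<^sup>2 * Q x h"
    and pos: "\<And>h. h \<noteq> 0 \<Longrightarrow> Q x0 h > 0"
  shows "\<exists>U. open U \<and> x0 \<in> U \<and> (\<forall>x\<in>U. x \<noteq> x0 \<longrightarrow> W x > W x0)"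
proof -
  obtain r where r: "r > 0" "\<And>x h. x \<in> ball x0 r \<Longrightarrow> h \<noteq> 0 \<Longrightarrow> Q x h > 0"
    using positive_near_point[OF cont hom pos] by blast
  have "W x > W x0" if x: "x \<in> ball x0 r" "x \<noteq> x0" for x
  proof -
    define h where "h = x - x0"
    have "h \<noteq> 0" using x(2) by (simp add: h_def)
    have on_segment: "x0 + t *\<^sub>R h \<in> ball x0 r" if "0 < t" "t < 1" for t
    proof -
      have "dist x0 (x0 + t *\<^sub>R h) = t * norm h" using that by (simp add: dist_norm)
      also have "\<dots> \<le> norm h" using that by (simp add: mult_left_le_one_le)
      also have "\<dots> < r" using x(1) by (simp add: h_def dist_norm norm_minus_commute)
      finally show ?thesis by simp
    qed
    have "(\<lambda>t. W (x0 + t *\<^sub>R h) - W x0) 1 > 0"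
    proof (rule positive_by_second_derivative)
      show "((\<lambda>t. W (x0 + t *\<^sub>R h) - W x0) has_real_derivative D (x0 + t *\<^sub>R h) h) (at t)" for t
        using DERIV_diff[OF dW DERIV_const] by simp
      show "0 < Q (x0 + t *\<^sub>R h) h" if "0 < t" "t < 1" for t
        using r(2)[OF on_segment[OF that] \<open>h \<noteq> 0\<close>] .
    qed (use dD crit in auto)
    then show ?thesis by (simp add: h_def)
  qed
  then show ?thesis using r(1) by (intro exI[of _ "ball x0 r"]) auto
qed

lemma diagm_mult_vec: "diagm x *v y = (\<chi> i. x$i * y$i)"
  by (simp add: diagm_def matrix_vector_mult_def vec_eq_iff mult_delta_left)

lemma diagm_mult: "diagm x ** diagm y = diagm (\<chi> i. x$i * (y$i::real))"
  by (simp add: diagm_def matrix_matrix_mult_def vec_eq_iff mult_delta_left mult_delta_right)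

lemma mat_1_eq_diagm: "mat 1 = diagm (\<chi> i. (1::real))"
  by (simp add: diagm_def mat_def vec_eq_iff)

lemma matrix_inv_unique:
  fixes A C :: "real^'n^'n"
  assumes "A ** C = mat 1" "C ** A = mat 1"
  shows "matrix_inv A = C"
proof -
  have inv: "A ** matrix_inv A = mat 1 \<and> matrix_inv A ** A = mat 1"
    unfolding matrix_inv_def by (rule someI[of _ C]) (use assms in blast)
  then have "matrix_inv A = (C ** A) ** matrix_inv A"
    using assms by (simp add: matrix_mul_lid)
  also have "\<dots> = C"
    using inv by (simp add: matrix_mul_assoc[symmetric] matrix_mul_rid)
  finally show ?thesis .
qed

lemma matrix_inv_diagm:
  assumes "\<forall>i. x$i \<noteq> (0::real)"
  shows "matrix_inv (diagm x) = diagm (\<chi> i. 1 / x$i)"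
  by (rule matrix_inv_unique) (use assms in \<open>simp_all add: diagm_mult mat_1_eq_diagm\<close>)

lemma sum_over_endpoints:
  fixes f :: "'a::finite \<Rightarrow> real"
  assumes "p \<noteq> q"
  shows "(\<Sum>i\<in>UNIV. if i = p \<or> i = q then f i else 0) = f p + f q"
proof -
  have "(\<Sum>i\<in>UNIV. if i = p \<or> i = q then f i else 0)
      = (\<Sum>i\<in>UNIV. (if i = p then f i else 0) + (if i = q then f i else 0))"
    by (rule sum.cong) (use assms in auto)
  then show ?thesis by (simp add: sum.distrib)
qed

lemma sum_over_edge_pairs:
  fixes f :: "'a::finite \<Rightarrow> 'a \<Rightarrow> real"
  assumes "p \<noteq> q"
  shows "(\<Sum>i\<in>UNIV. \<Sum>j\<in>UNIV. if {p, q} = {i, j} then f i j else 0) = f p q + f q p"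
proof -
  have "(\<Sum>j\<in>UNIV. if {p, q} = {i, j} then f i j else 0)
      = (if i = p \<or> i = q then (if i = p then f p q else f q p) else 0)" for i
    using assms by (auto simp: doubleton_eq_iff)
  then show ?thesis
    using sum_over_endpoints[OF assms, of "\<lambda>i. if i = p then f p q else f q p"] assms by simp
qed

lemma Emat_entry:
  fixes pe ne :: "'m::finite \<Rightarrow> 'n::finite"
  assumes no_loops: "\<forall>k. pe k \<noteq> ne k"
  shows "Emat pe ne B Xd Xdp eta $ i $ j = (if i = j then Fvec B Xd Xdp $ i else 0)
       - (\<Sum>k\<in>UNIV. if {pe k, ne k} = {i, j} then B i j * cos (eta$k) else 0)"
proof (cases "i = j")
  case True
  have "{pe k, ne k} \<noteq> {i, j}" for k
    using True no_loops[rule_format, of k] by (auto simp: doubleton_eq_iff)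
  then show ?thesis using True by (auto simp: Emat_def intro!: sum.neutral)
next
  case False
  then show ?thesis by (simp add: Emat_def sum.If_cases Int_def)
qed

lemma Emat_bilinear:
  fixes pe ne :: "'m::finite \<Rightarrow> 'n::finite"
  assumes no_loops: "\<forall>k. pe k \<noteq> ne k" and B_sym: "\<forall>i j. B i j = B j i"
  shows "u \<bullet> (Emat pe ne B Xd Xdp eta *v V) =
     (\<Sum>i\<in>UNIV. Fvec B Xd Xdp $ i * u$i * V$i)
     - (\<Sum>k\<in>UNIV. B (pe k) (ne k) * cos (eta$k) * (u$(pe k) * V$(ne k) + u$(ne k) * V$(pe k)))"
proof -
  define f where "f k i j = u$i * B i j * cos (eta$k) * V$j" for k i j
  have "u \<bullet> (Emat pe ne B Xd Xdp eta *v V)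
      = (\<Sum>i\<in>UNIV. \<Sum>j\<in>UNIV. u$i * Emat pe ne B Xd Xdp eta $ i $ j * V$j)"
    by (simp add: inner_vec_def matrix_vector_mult_def sum_distrib_left mult.assoc)
  also have "\<dots> = (\<Sum>i\<in>UNIV. Fvec B Xd Xdp $ i * u$i * V$i)
      - (\<Sum>i\<in>UNIV. \<Sum>j\<in>UNIV. \<Sum>k\<in>UNIV. if {pe k, ne k} = {i, j} then f k i j else 0)"
  proof -
    have "u$i * Emat pe ne B Xd Xdp eta $ i $ j * V$j = (if i = j then Fvec B Xd Xdp $ i * u$i * V$i else 0)
        - (\<Sum>k\<in>UNIV. if {pe k, ne k} = {i, j} then f k i j else 0)" for i j
      by (cases "i = j") (auto simp: Emat_entry[OF no_loops] f_def sum_distrib_left sum_distrib_right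
          algebra_simps intro!: sum.cong)
    then show ?thesis by (simp add: sum_subtractf)
  qed
  also have "(\<Sum>i\<in>UNIV. \<Sum>j\<in>UNIV. \<Sum>k\<in>UNIV. if {pe k, ne k} = {i, j} then f k i j else 0)
      = (\<Sum>k\<in>UNIV. \<Sum>i\<in>UNIV. \<Sum>j\<in>UNIV. if {pe k, ne k} = {i, j} then f k i j else 0)"
    by (subst sum.swap, rule sum.cong[OF refl], rule sum.swap)
  also have "\<dots> = (\<Sum>k\<in>UNIV. f k (pe k) (ne k) + f k (ne k) (pe k))"
    using no_loops by (simp add: sum_over_edge_pairs)
  also have "\<dots> = (\<Sum>k\<in>UNIV. B (pe k) (ne k) * cos (eta$k) * (u$(pe k) * V$(ne k) + u$(ne k) * V$(pe k)))"
    using B_sym by (simp add: f_def algebra_simps)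
  finally show ?thesis .
qed

lemma W2_expand:
  "W2 pe ne B Xd Xdp Efd eta etab V Vb =
     - (\<Sum>k\<in>UNIV. B (pe k) (ne k) * V$(pe k) * V$(ne k) * cos (eta$k))
     + (\<Sum>k\<in>UNIV. B (pe k) (ne k) * Vb$(pe k) * Vb$(ne k) * cos (etab$k))
     - (\<Sum>k\<in>UNIV. B (pe k) (ne k) * Vb$(pe k) * Vb$(ne k) * sin (etab$k) * (eta$k - etab$k))
     - (\<Sum>i\<in>UNIV. Efd$i * (V$i - Vb$i))
     + (1/2) * (\<Sum>i\<in>UNIV. Fvec B Xd Xdp $ i * V$i * V$i)
     - (1/2) * (\<Sum>i\<in>UNIV. Fvec B Xd Xdp $ i * Vb$i * Vb$i)"
  unfolding W2_def Gam_def diagm_mult_vec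
  by (simp add: inner_vec_def gam_def vcos_def vsin_def algebra_simps)

lemma Gam_vsin: "Gam pe ne B V *v vsin eta = (\<chi> k. V$(pe k) * V$(ne k) * B (pe k) (ne k) * sin (eta$k))"
  by (simp add: Gam_def diagm_mult_vec gam_def vsin_def)

definition dW2 :: "('m::finite \<Rightarrow> 'n::finite) \<Rightarrow> ('m \<Rightarrow> 'n) \<Rightarrow> ('n \<Rightarrow> 'n \<Rightarrow> real) \<Rightarrow> real^'n \<Rightarrow> real^'n
    \<Rightarrow> real^'n \<Rightarrow> real^'m \<Rightarrow> real^'n \<Rightarrow> real^'m \<Rightarrow> real^'n \<Rightarrow> real^'m \<Rightarrow> real^'n \<Rightarrow> real" where
  "dW2 pe ne B Xd Xdp Efd etab Vb eta V a b =
     (\<Sum>k\<in>UNIV. (B (pe k) (ne k) * V$(pe k) * V$(ne k) * sin (eta$k)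
                  - B (pe k) (ne k) * Vb$(pe k) * Vb$(ne k) * sin (etab$k)) * a$k)
   + (\<Sum>i\<in>UNIV. (Fvec B Xd Xdp $ i * V$i - Efd$i) * b$i)
   - (\<Sum>k\<in>UNIV. B (pe k) (ne k) * cos (eta$k) * (b$(pe k) * V$(ne k) + b$(ne k) * V$(pe k)))"

lemma W2_has_derivative:
  assumes "\<And>k. ((\<lambda>s. eta s $ k) has_real_derivative a$k) (at t)"
    and "\<And>i. ((\<lambda>s. V s $ i) has_real_derivative b$i) (at t)"
  shows "((\<lambda>s. W2 pe ne B Xd Xdp Efd (eta s) etab (V s) Vb) has_real_derivative
           dW2 pe ne B Xd Xdp Efd etab Vb (eta t) (V t) a b) (at t)"
  unfolding W2_expand
  by (rule DERIV_cong, (rule derivative_intros assms)+)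
    (simp add: dW2_def algebra_simps sum.distrib sum_subtractf sum_distrib_left)

lemma dW2_gradient_form:
  fixes pe ne :: "'m::finite \<Rightarrow> 'n::finite"
  assumes "\<forall>k. pe k \<noteq> ne k" and "\<forall>i j. B i j = B j i"
  shows "dW2 pe ne B Xd Xdp Efd etab Vb eta V a b
       = (Gam pe ne B V *v vsin eta - Gam pe ne B Vb *v vsin etab) \<bullet> a
         + b \<bullet> (Emat pe ne B Xd Xdp eta *v V - Efd)"
  unfolding dW2_def inner_diff_right Emat_bilinear[OF assms] Gam_vsin
  by (simp add: inner_vec_def algebra_simps sum_subtractf sum.distrib)

lemma dW2_equilibrium:
  fixes pe ne :: "'m::finite \<Rightarrow> 'n::finite"
  assumes "\<forall>k. pe k \<noteq> ne k" and "\<forall>i j. B i j = B j i"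
    and "Emat pe ne B Xd Xdp etab *v Vb = Efd"
  shows "dW2 pe ne B Xd Xdp Efd etab Vb etab Vb a b = 0"
  using assms by (simp add: dW2_gradient_form)

definition d2W2 :: "('m::finite \<Rightarrow> 'n::finite) \<Rightarrow> ('m \<Rightarrow> 'n) \<Rightarrow> ('n \<Rightarrow> 'n \<Rightarrow> real) \<Rightarrow> real^'n \<Rightarrow> real^'n
    \<Rightarrow> real^'m \<Rightarrow> real^'n \<Rightarrow> real^'m \<Rightarrow> real^'n \<Rightarrow> real" where
  "d2W2 pe ne B Xd Xdp eta V a b =
     (\<Sum>k\<in>UNIV. B (pe k) (ne k) * V$(pe k) * V$(ne k) * cos (eta$k) * a$k * a$k)
   + 2 * (\<Sum>k\<in>UNIV. B (pe k) (ne k) * sin (eta$k) * a$k * (b$(pe k) * V$(ne k) + b$(ne k) * V$(pe k)))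
   + (\<Sum>i\<in>UNIV. Fvec B Xd Xdp $ i * b$i * b$i)
   - 2 * (\<Sum>k\<in>UNIV. B (pe k) (ne k) * cos (eta$k) * b$(pe k) * b$(ne k))"

lemma dW2_line_derivative:
  "((\<lambda>t. dW2 pe ne B Xd Xdp Efd etab Vb (eta + t *\<^sub>R a) (V + t *\<^sub>R b) a b) has_real_derivative
      d2W2 pe ne B Xd Xdp (eta + t *\<^sub>R a) (V + t *\<^sub>R b) a b) (at t)"
  unfolding dW2_def vector_add_component vector_scaleR_component real_scaleR_def
  by (rule DERIV_cong, (rule derivative_intros)+)
    (simp add: d2W2_def algebra_simps sum.distrib sum_subtractf sum_distrib_left)

lemma W2_line_derivative:
  "((\<lambda>t. W2 pe ne B Xd Xdp Efd (eta + t *\<^sub>R a) etab (V + t *\<^sub>R b) Vb) has_real_derivative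
      dW2 pe ne B Xd Xdp Efd etab Vb (eta + t *\<^sub>R a) (V + t *\<^sub>R b) a b) (at t)"
  by (rule W2_has_derivative)
    (simp only: vector_add_component vector_scaleR_component real_scaleR_def,
     rule DERIV_cong, (rule derivative_intros)+, simp)+

lemma d2W2_scale:
  "d2W2 pe ne B Xd Xdp eta V (c *\<^sub>R a) (c *\<^sub>R b) = c\<^sup>2 * d2W2 pe ne B Xd Xdp eta V a b"
  unfolding d2W2_def by (simp add: sum_distrib_left algebra_simps power2_eq_square)

lemma d2W2_continuous:
  "continuous_on UNIV (\<lambda>p. d2W2 pe ne B Xd Xdp (fst (fst p)) (snd (fst p)) (fst (snd p)) (snd (snd p)))"
  unfolding d2W2_def by (intro continuous_intros)

lemma absm_incidence_entry:
  "absm (incidence pe ne) $ i $ k = (if i = pe k \<or> i = ne k then (1::real) else 0)"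
  by (simp add: absm_def incidence_def)

lemma absm_incidence_transpose_mult:
  fixes pe ne :: "'m::finite \<Rightarrow> 'n::finite"
  assumes "\<forall>k. pe k \<noteq> ne k"
  shows "transpose (absm (incidence pe ne)) *v y = (\<chi> k. y$(pe k) + y$(ne k))"
proof -
  have "(transpose (absm (incidence pe ne)) *v y) $ k
      = (\<Sum>i\<in>UNIV. if i = pe k \<or> i = ne k then y$i else 0)" for k
    by (auto simp: matrix_vector_mult_def transpose_def absm_incidence_entry intro!: sum.cong
        simp del: transpose_matrix_vector)
  then show ?thesis using assms by (simp add: vec_eq_iff sum_over_endpoints del: transpose_matrix_vector)
qed

lemma inner_absm_incidence:
  fixes pe ne :: "'m::finite \<Rightarrow> 'n::finite"
  assumes "\<forall>k. pe k \<noteq> ne k"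
  shows "x \<bullet> (absm (incidence pe ne) *v z) = (\<Sum>k\<in>UNIV. z$k * (x$(pe k) + x$(ne k)))"
proof -
  have "x \<bullet> (absm (incidence pe ne) *v z) = (transpose (absm (incidence pe ne)) *v x) \<bullet> z"
    by (simp add: dot_lmul_matrix)
  also have "\<dots> = (\<chi> k. x$(pe k) + x$(ne k)) \<bullet> z"
    by (simp only: absm_incidence_transpose_mult[OF assms])
  finally show ?thesis
    by (simp add: inner_vec_def mult.commute)
qed

definition star_correction :: "('m::finite \<Rightarrow> 'n::finite) \<Rightarrow> ('m \<Rightarrow> 'n) \<Rightarrow> ('n \<Rightarrow> 'n \<Rightarrow> real)
    \<Rightarrow> real^'m \<Rightarrow> real^'n \<Rightarrow> real^'n^'n" where
  "star_correction pe ne B etab Vb =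
     matrix_inv (diagm Vb) ** absm (incidence pe ne) ** Gam pe ne B Vb ** diagm (vsin etab)
       ** matrix_inv (diagm (vcos etab)) ** diagm (vsin etab) ** transpose (absm (incidence pe ne))
       ** matrix_inv (diagm Vb)"

lemma cond_star_iff:
  "cond_star pe ne B Xd Xdp etab Vb
     \<longleftrightarrow> pos_def (Emat pe ne B Xd Xdp etab - star_correction pe ne B etab Vb)"
  by (simp add: cond_star_def star_correction_def)

lemma star_correction_quadratic:
  fixes pe ne :: "'m::finite \<Rightarrow> 'n::finite"
  assumes no_loops: "\<forall>k. pe k \<noteq> ne k"
    and Vb_nz: "\<forall>i. Vb$i \<noteq> 0" and cos_nz: "\<forall>k. cos (etab$k) \<noteq> 0"
  shows "b \<bullet> (star_correction pe ne B etab Vb *v b)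
       = (\<Sum>k\<in>UNIV. B (pe k) (ne k) * Vb$(pe k) * Vb$(ne k) * (sin (etab$k))\<^sup>2 / cos (etab$k)
                     * (b$(pe k) / Vb$(pe k) + b$(ne k) / Vb$(ne k))\<^sup>2)"
proof -
  define w where "w k = b$(pe k) / Vb$(pe k) + b$(ne k) / Vb$(ne k)" for k
  define z where "z = (\<chi> k. B (pe k) (ne k) * Vb$(pe k) * Vb$(ne k) * (sin (etab$k))\<^sup>2 / cos (etab$k) * w k)"
  have vcos_nz: "\<forall>k. vcos etab $ k \<noteq> 0" using cos_nz by (simp add: vcos_def)
  have "star_correction pe ne B etab Vb *v b
      = matrix_inv (diagm Vb) *v (absm (incidence pe ne) *v (Gam pe ne B Vb *v (diagm (vsin etab)
         *v (matrix_inv (diagm (vcos etab)) *v (diagm (vsin etab) *v (transpose (absm (incidence pe ne))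
         *v (matrix_inv (diagm Vb) *v b)))))))"
    by (simp only: star_correction_def matrix_vector_mul_assoc[symmetric])
  also have "\<dots> = diagm (\<chi> i. 1 / Vb$i) *v (absm (incidence pe ne) *v z)"
    unfolding matrix_inv_diagm[OF Vb_nz] matrix_inv_diagm[OF vcos_nz] absm_incidence_transpose_mult[OF no_loops]
    by (simp add: diagm_mult_vec Gam_def gam_def vsin_def vcos_def z_def w_def power2_eq_square
        vec_eq_iff field_simps del: transpose_matrix_vector)
  finally have "b \<bullet> (star_correction pe ne B etab Vb *v b) = (\<chi> i. b$i / Vb$i) \<bullet> (absm (incidence pe ne) *v z)"
    by (simp add: inner_vec_def diagm_mult_vec)
  then show ?thesis
    by (simp add: inner_absm_incidence[OF no_loops] z_def w_def power2_eq_square mult.assoc)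
qed

lemma d2W2_complete_square:
  fixes pe ne :: "'m::finite \<Rightarrow> 'n::finite"
  assumes no_loops: "\<forall>k. pe k \<noteq> ne k" and B_sym: "\<forall>i j. B i j = B j i"
    and Vb_nz: "\<forall>i. Vb$i \<noteq> 0" and cos_nz: "\<forall>k. cos (etab$k) \<noteq> 0"
  shows "d2W2 pe ne B Xd Xdp etab Vb a b
       = (\<Sum>k\<in>UNIV. B (pe k) (ne k) * Vb$(pe k) * Vb$(ne k) * cos (etab$k)
            * (a$k + sin (etab$k) / cos (etab$k) * (b$(pe k) / Vb$(pe k) + b$(ne k) / Vb$(ne k)))\<^sup>2)
         + b \<bullet> ((Emat pe ne B Xd Xdp etab - star_correction pe ne B etab Vb) *v b)"
proof -
  let ?ga = "\<lambda>k. B (pe k) (ne k) * Vb$(pe k) * Vb$(ne k)"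
  let ?w = "\<lambda>k. b$(pe k) / Vb$(pe k) + b$(ne k) / Vb$(ne k)"
  have cross: "B (pe k) (ne k) * sin (etab$k) * a$k * (b$(pe k) * Vb$(ne k) + b$(ne k) * Vb$(pe k))
       = ?ga k * sin (etab$k) * a$k * ?w k" for k
    using Vb_nz by (simp add: field_simps)
  have square: "?ga k * cos (etab$k) * (a$k + sin (etab$k) / cos (etab$k) * ?w k)\<^sup>2
      = ?ga k * cos (etab$k) * a$k * a$k + 2 * (?ga k * sin (etab$k) * a$k * ?w k)
        + ?ga k * (sin (etab$k))\<^sup>2 / cos (etab$k) * (?w k)\<^sup>2" for k
    using cos_nz by (simp add: field_simps power2_eq_square)
  have "b \<bullet> (Emat pe ne B Xd Xdp etab *v b) = (\<Sum>i\<in>UNIV. Fvec B Xd Xdp $ i * b$i * b$i)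
      - 2 * (\<Sum>k\<in>UNIV. B (pe k) (ne k) * cos (etab$k) * b$(pe k) * b$(ne k))"
    unfolding Emat_bilinear[OF no_loops B_sym] by (simp add: sum_distrib_left algebra_simps)
  then show ?thesis
    unfolding matrix_vector_mult_diff_rdistrib inner_diff_right
      star_correction_quadratic[OF no_loops Vb_nz cos_nz] d2W2_def cross square
    by (simp add: sum.distrib sum_distrib_left algebra_simps)
qed

lemma d2W2_positive_at_equilibrium:
  fixes pe ne :: "'m::finite \<Rightarrow> 'n::finite"
  assumes no_loops: "\<forall>k. pe k \<noteq> ne k" and B_sym: "\<forall>i j. B i j = B j i"
    and B_edge: "\<forall>k. B (pe k) (ne k) > 0"
    and etab_range: "\<forall>k. - (pi/2) < etab$k \<and> etab$k < pi/2"
    and Vb_pos: "\<forall>i. Vb$i > 0"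
    and star: "cond_star pe ne B Xd Xdp etab Vb"
    and nz: "(a, b) \<noteq> 0"
  shows "d2W2 pe ne B Xd Xdp etab Vb a b > 0"
proof -
  have cos_pos: "cos (etab$k) > 0" for k using etab_range by (simp add: cos_gt_zero_pi)
  have Vb_nz: "\<forall>i. Vb$i \<noteq> 0" and cos_nz: "\<forall>k. cos (etab$k) \<noteq> 0"
    using Vb_pos cos_pos by (metis less_irrefl)+
  define S where "S k = B (pe k) (ne k) * Vb$(pe k) * Vb$(ne k) * cos (etab$k)
            * (a$k + sin (etab$k) / cos (etab$k) * (b$(pe k) / Vb$(pe k) + b$(ne k) / Vb$(ne k)))\<^sup>2" for k
  have S_nonneg: "S k \<ge> 0" for k
    unfolding S_def using B_edge Vb_pos cos_pos by (simp add: less_imp_le)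
  have split: "d2W2 pe ne B Xd Xdp etab Vb a b
      = sum S UNIV + b \<bullet> ((Emat pe ne B Xd Xdp etab - star_correction pe ne B etab Vb) *v b)"
    unfolding S_def by (rule d2W2_complete_square[OF no_loops B_sym Vb_nz cos_nz])
  have "sum S UNIV \<ge> 0" by (rule sum_nonneg) (rule S_nonneg)
  show ?thesis
  proof (cases "b = 0")
    case False
    then have "b \<bullet> ((Emat pe ne B Xd Xdp etab - star_correction pe ne B etab Vb) *v b) > 0"
      using star by (simp add: cond_star_iff pos_def_def)
    then show ?thesis using split \<open>sum S UNIV \<ge> 0\<close> by linarith
  next
    case True
    with nz have "a \<noteq> 0" by (simp add: zero_prod_def)
    then obtain k where "a$k \<noteq> 0" by (auto simp: vec_eq_iff)
    then have "S k > 0"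
      unfolding S_def using True B_edge Vb_pos cos_pos by simp
    then have "sum S UNIV > 0" by (rule sum_pos2[OF finite UNIV_I]) (use S_nonneg in auto)
    then show ?thesis using split True by simp
  qed
qed

lemma W2_locally_positive_definite:
  fixes pe ne :: "'m::finite \<Rightarrow> 'n::finite"
  assumes no_loops: "\<forall>k. pe k \<noteq> ne k" and B_sym: "\<forall>i j. B i j = B j i"
    and B_edge: "\<forall>k. B (pe k) (ne k) > 0"
    and etab_range: "\<forall>k. - (pi/2) < etab$k \<and> etab$k < pi/2"
    and Vb_pos: "\<forall>i. Vb$i > 0"
    and equil: "Emat pe ne B Xd Xdp etab *v Vb = Efd"
    and star: "cond_star pe ne B Xd Xdp etab Vb"
  shows "\<exists>U. open U \<and> (etab, Vb) \<in> U \<and> W2 pe ne B Xd Xdp Efd etab etab Vb Vb = 0 \<and>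
            (\<forall>eta V. (eta, V) \<in> U \<and> (eta, V) \<noteq> (etab, Vb) \<longrightarrow>
               W2 pe ne B Xd Xdp Efd eta etab V Vb > 0)"
proof -
  let ?W = "\<lambda>p. W2 pe ne B Xd Xdp Efd (fst p) etab (snd p) Vb"
  let ?D = "\<lambda>p h. dW2 pe ne B Xd Xdp Efd etab Vb (fst p) (snd p) (fst h) (snd h)"
  let ?Q = "\<lambda>p h. d2W2 pe ne B Xd Xdp (fst p) (snd p) (fst h) (snd h)"
  have W_equil: "W2 pe ne B Xd Xdp Efd etab etab Vb Vb = 0" by (simp add: W2_def)
  obtain U where "open U" "(etab, Vb) \<in> U" and U_pos: "\<forall>p\<in>U. p \<noteq> (etab, Vb) \<longrightarrow> ?W p > ?W (etab, Vb)"
  proof (atomize_elim, rule strict_local_min_second_variation)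
    show "((\<lambda>t. ?W (p + t *\<^sub>R h)) has_real_derivative ?D (p + t *\<^sub>R h) h) (at t)" for p h t
      using W2_line_derivative by simp
    show "((\<lambda>t. ?D (p + t *\<^sub>R h) h) has_real_derivative ?Q (p + t *\<^sub>R h) h) (at t)" for p h t
      using dW2_line_derivative by simp
    show "?D (etab, Vb) h = 0" for h
      using dW2_equilibrium[OF no_loops B_sym equil] by simp
    show "continuous_on UNIV (\<lambda>p. ?Q (fst p) (snd p))"
      by (rule d2W2_continuous)
    show "?Q p (c *\<^sub>R h) = c\<^sup>2 * ?Q p h" for p c h
      using d2W2_scale by simp
    show "?Q (etab, Vb) h > 0" if "h \<noteq> 0" for h
      using d2W2_positive_at_equilibrium[OF no_loops B_sym B_edge etab_range Vb_pos star] that by simp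
  qed
  have "W2 pe ne B Xd Xdp Efd eta etab V Vb > 0" if "(eta, V) \<in> U" "(eta, V) \<noteq> (etab, Vb)" for eta V
    using U_pos that W_equil by fastforce
  then show ?thesis using \<open>open U\<close> \<open>(etab, Vb) \<in> U\<close> W_equil by blast
qed

lemma W2_dissipation:
  fixes pe ne :: "'m::finite \<Rightarrow> 'n::finite"
  assumes no_loops: "\<forall>k. pe k \<noteq> ne k" and B_sym: "\<forall>i j. B i j = B j i"
    and T_pos: "\<forall>i. Tv$i > 0"
    and d_eta: "(eta has_vector_derivative v) (at t)"
    and d_V: "(V has_vector_derivative V') (at t)"
    and dynamics: "diagm Tv *v V' = - (Emat pe ne B Xd Xdp (eta t) *v V t) + Efd"
  shows "((\<lambda>s. W2 pe ne B Xd Xdp Efd (eta s) etab (V s) Vb) has_real_derivative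
           - ((Emat pe ne B Xd Xdp (eta t) *v V t - Efd)
               \<bullet> (matrix_inv (diagm Tv) *v (Emat pe ne B Xd Xdp (eta t) *v V t - Efd)))
           + (Gam pe ne B (V t) *v vsin (eta t) - Gam pe ne B Vb *v vsin etab) \<bullet> v) (at t)"
proof -
  define g where "g = Emat pe ne B Xd Xdp (eta t) *v V t - Efd"
  have d_eta_k: "((\<lambda>s. eta s $ k) has_real_derivative v $ k) (at t)" for k
    using bounded_linear.has_vector_derivative[OF bounded_linear_vec_nth d_eta]
    by (simp add: has_real_derivative_iff_has_vector_derivative)
  have d_V_i: "((\<lambda>s. V s $ i) has_real_derivative V' $ i) (at t)" for i
    using bounded_linear.has_vector_derivative[OF bounded_linear_vec_nth d_V]
    by (simp add: has_real_derivative_iff_has_vector_derivative)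
  have T_nz: "\<forall>i. Tv$i \<noteq> 0" using T_pos by (metis less_irrefl)
  have V'_eq: "V' $ i = - g$i / Tv$i" for i
  proof -
    have "Tv$i * V' $ i = - g$i"
      using arg_cong[OF dynamics, of "\<lambda>x. x$i"] by (simp add: diagm_mult_vec g_def)
    then show ?thesis using T_nz by (simp add: field_simps)
  qed
  have "g \<bullet> (matrix_inv (diagm Tv) *v g) = - (V' \<bullet> g)"
    by (simp add: matrix_inv_diagm[OF T_nz] diagm_mult_vec inner_vec_def V'_eq sum_negf[symmetric])
  then have derivative_value: "dW2 pe ne B Xd Xdp Efd etab Vb (eta t) (V t) v V'
      = - (g \<bullet> (matrix_inv (diagm Tv) *v g))
        + (Gam pe ne B (V t) *v vsin (eta t) - Gam pe ne B Vb *v vsin etab) \<bullet> v"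
    by (simp add: dW2_gradient_form[OF no_loops B_sym] g_def)
  show ?thesis
    using W2_has_derivative[OF d_eta_k d_V_i, of pe ne B Xd Xdp Efd etab Vb]
    unfolding derivative_value g_def .
qed

theorem proposition2:
  fixes pe ne :: "'m::finite \<Rightarrow> 'n::finite"
    and B :: "'n \<Rightarrow> 'n \<Rightarrow> real"
    and Xd Xdp Tv Efd Vb :: "real^'n"
    and etab :: "real^'m"
  assumes no_loops: "\<forall>k. pe k \<noteq> ne k"
    and simple: "\<forall>k l. {pe k, ne k} = {pe l, ne l} \<longrightarrow> k = l"
    and connected: "\<forall>i j. (\<lambda>a b. \<exists>k. {pe k, ne k} = {a, b})\<^sup>*\<^sup>* i j"
    and B_sym: "\<forall>i j. B i j = B j i"
    and B_edge: "\<forall>k. B (pe k) (ne k) > 0"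
    and B_self: "\<forall>i. B i i < 0 \<and> \<bar>B i i\<bar> > (\<Sum>j\<in>{j. \<exists>k. {pe k, ne k} = {i, j}}. \<bar>B i j\<bar>)"
    and X_pos: "\<forall>i. Xd$i > Xdp$i \<and> Xdp$i > 0"
    and T_pos: "\<forall>i. Tv$i > 0"
    and etab_range: "\<forall>k. - (pi/2) < etab$k \<and> etab$k < pi/2"
    and Vb_pos: "\<forall>i. Vb$i > 0"
    and equil: "Emat pe ne B Xd Xdp etab *v Vb = Efd"
    and star: "cond_star pe ne B Xd Xdp etab Vb"
  shows "(\<exists>U. open U \<and> (etab, Vb) \<in> U \<and> W2 pe ne B Xd Xdp Efd etab etab Vb Vb = 0 \<and>
            (\<forall>eta V. (eta, V) \<in> U \<and> (eta, V) \<noteq> (etab, Vb) \<longrightarrow>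
               W2 pe ne B Xd Xdp Efd eta etab V Vb > 0))
      \<and> (\<forall>(eta :: real \<Rightarrow> real^'m) (V :: real \<Rightarrow> real^'n) (v :: real \<Rightarrow> real^'m) V' t.
            (eta has_vector_derivative v t) (at t)
            \<and> (V has_vector_derivative V' t) (at t)
            \<and> diagm Tv *v V' t = - (Emat pe ne B Xd Xdp (eta t) *v V t) + Efd
          \<longrightarrow> (let g = Emat pe ne B Xd Xdp (eta t) *v V t - Efd;
                   lam = Gam pe ne B (V t) *v vsin (eta t);
                   lamb = Gam pe ne B Vb *v vsin etab;
                   vb = (0 :: real^'m)
               in ((\<lambda>s. W2 pe ne B Xd Xdp Efd (eta s) etab (V s) Vb) has_real_derivative
                     (- (g \<bullet> (matrix_inv (diagm Tv) *v g)) + (lam - lamb) \<bullet> (v t - vb))) (at t)))"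
  using W2_locally_positive_definite[OF no_loops B_sym B_edge etab_range Vb_pos equil star]
    W2_dissipation[OF no_loops B_sym T_pos]
  by (auto simp: Let_def)

end
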